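(* Let $G$ be a finite group with $G/Z(G)\cong D_{2m}$, $m\ge3$. Then $\Gamma_G$ is Q-integral iff $m$ is odd.
   Context: $D_{2m}=\langle x,y\mid x^m=y^2=1,\ yxy^{-1}=x^{-1}\rangle$. The NCCC-graph $\Gamma_G$ of a finite non-abelian group $G$ with center $Z(G)$ has vertex set $\{x^G: x\in G\setminus Z(G)\}$ ($x^G$ the conjugacy class of $x$), distinct vertices $x^G,y^G$ adjacent iff $x'y'\neq y'x'$ for all $x'\in x^G,y'\in y^G$. A graph is Q-integral if all eigenvalues of its signless Laplacian $Q=D+A$ ($A$ adjacency, $D$ degree matrix) are integers. *)

theory Defs
  imports Complex_Main "HOL-Algebra.Algebra"
begin

definition grp_center :: "('a, 'b) monoid_scheme \<Rightarrow> 'a set" where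
  "grp_center G = {z \<in> carrier G. \<forall>g \<in> carrier G. z \<otimes>\<^bsub>G\<^esub> g = g \<otimes>\<^bsub>G\<^esub> z}"

definition conj_class :: "('a, 'b) monoid_scheme \<Rightarrow> 'a \<Rightarrow> 'a set" where
  "conj_class G x = {g \<otimes>\<^bsub>G\<^esub> x \<otimes>\<^bsub>G\<^esub> inv\<^bsub>G\<^esub> g | g. g \<in> carrier G}"

text \<open>Dihedral group D_{2m} of order 2m, concretely: the pair (i, e) stands for x^i y^e,
  with 0 \<le> i < m and e \<in> {0,1}; the relations x^m = y^2 = 1, y x y^{-1} = x^{-1}
  give (i,e)(j,f) = (i + (-1)^e j mod m, e + f mod 2).\<close>

definition dihedral :: "nat \<Rightarrow> (int \<times> int) monoid" where
  "dihedral m = \<lparr> carrier = {0..<int m} \<times> {0, 1},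
     monoid.mult = (\<lambda>(i, e) (j, f). ((i + (-1) ^ nat e * j) mod int m, (e + f) mod 2)),
     monoid.one = (0, 0) \<rparr>"

definition NCCC_vertices :: "('a, 'b) monoid_scheme \<Rightarrow> 'a set set" where
  "NCCC_vertices G = conj_class G ` (carrier G - grp_center G)"

definition NCCC_adj :: "('a, 'b) monoid_scheme \<Rightarrow> 'a set \<Rightarrow> 'a set \<Rightarrow> bool" where
  "NCCC_adj G C D \<longleftrightarrow> C \<noteq> D \<and>
     (\<forall>x' \<in> C. \<forall>y' \<in> D. x' \<otimes>\<^bsub>G\<^esub> y' \<noteq> y' \<otimes>\<^bsub>G\<^esub> x')"

definition graph_degree :: "'v set \<Rightarrow> ('v \<Rightarrow> 'v \<Rightarrow> bool) \<Rightarrow> 'v \<Rightarrow> nat" where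
  "graph_degree V adj u = card {w \<in> V. adj u w}"

definition signless_laplacian :: "'v set \<Rightarrow> ('v \<Rightarrow> 'v \<Rightarrow> bool) \<Rightarrow> 'v \<Rightarrow> 'v \<Rightarrow> complex" where
  "signless_laplacian V adj u w =
     (if u = w then of_nat (graph_degree V adj u) else 0) + (if adj u w then 1 else 0)"

definition is_eigenvalue_on :: "'v set \<Rightarrow> ('v \<Rightarrow> 'v \<Rightarrow> complex) \<Rightarrow> complex \<Rightarrow> bool" where
  "is_eigenvalue_on V M c \<longleftrightarrow>
     (\<exists>v :: 'v \<Rightarrow> complex. (\<exists>u \<in> V. v u \<noteq> 0) \<and>
        (\<forall>u \<in> V. (\<Sum>w \<in> V. M u w * v w) = c * v u))"

definition Q_integral :: "'v set \<Rightarrow> ('v \<Rightarrow> 'v \<Rightarrow> bool) \<Rightarrow> bool" where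
  "Q_integral V adj \<longleftrightarrow>
     (\<forall>c. is_eigenvalue_on V (signless_laplacian V adj) c \<longrightarrow> c \<in> \<int>)"

end

theory Submission
  imports Defs
begin

text \<open>Let \<open>\<pi> : G \<rightarrow> D\<^sub>2\<^sub>m\<close> have kernel \<open>Z(G)\<close>, and split \<open>G\<close> into the preimage \<open>R\<close> of the
  rotations and the preimage \<open>F\<close> of the reflections. \<open>R\<close> is abelian, being cyclic modulo the
  centre, and a noncentral element of \<open>R\<close> commutes with no element of \<open>F\<close>. Conjugation moves the
  rotation index of a reflection by an even amount, freely so; hence two reflections have
  conjugates with equal image in \<open>D\<^sub>2\<^sub>m\<close>, which then commute, unless \<open>m\<close> is even and
  their indices differ in parity. So for odd \<open>m\<close> the NCCC-graph is complete bipartite (classes in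
  \<open>R - Z\<close> versus classes in \<open>F\<close>), whose signless Laplacian spectrum is integral. For even \<open>m\<close>
  it is complete tripartite with parts of sizes \<open>(m - 1)p, p, p\<close>, where \<open>|Z| = 2p\<close>, and has the
  eigenvalue \<open>((m + 3)p + p\<surd>((m + 3)\<^sup>2 - 16))/2\<close>, irrational because \<open>(m + 3)\<^sup>2 - 16\<close> is never
  a square.\<close>

lemma quadratic_no_int_root:
  fixes k :: int and m p :: nat
  assumes "m \<ge> 3" "p \<ge> 1"
  shows "k\<^sup>2 - int ((m + 3) * p) * k + 4 * int p ^ 2 \<noteq> 0"
proof
  assume root: "k\<^sup>2 - int ((m + 3) * p) * k + 4 * int p ^ 2 = 0"
  define M P where "M = int m + 3" and "P = int p"
  have "(2 * k - M * P)\<^sup>2 = 4 * (k\<^sup>2 - int ((m + 3) * p) * k + 4 * int p ^ 2) + P\<^sup>2 * (M\<^sup>2 - 16)"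
    unfolding M_def P_def by (simp add: algebra_simps power2_eq_square)
  with root have disc: "(2 * k - M * P)\<^sup>2 = P\<^sup>2 * (M\<^sup>2 - 16)" by simp
  then have "P\<^sup>2 dvd (2 * k - M * P)\<^sup>2" by simp
  then have "P dvd 2 * k - M * P" by simp
  then obtain j where "2 * k - M * P = P * j" by blast
  with disc \<open>p \<ge> 1\<close> have j: "j\<^sup>2 = M\<^sup>2 - 16" unfolding P_def by (simp add: power_mult_distrib)
  \<comment> \<open>hence (M - |j|)(M + |j|) = 16 with two factors of equal parity, so both are even\<close>
  define a b where "a = M - \<bar>j\<bar>" and "b = M + \<bar>j\<bar>"
  have ab: "a * b = 16" using j unfolding a_def b_def by (simp add: algebra_simps power2_eq_square)
  have "M \<ge> 6" using \<open>m \<ge> 3\<close> unfolding M_def by simp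
  then have "b > 0" unfolding b_def by simp
  with ab have "a > 0" by (metis zero_less_mult_pos2 zero_less_numeral)
  have "even a"
  proof (rule ccontr)
    assume "odd a"
    moreover have "b = a + 2 * \<bar>j\<bar>" unfolding a_def b_def by simp
    ultimately have "odd (a * b)" by simp
    then show False using ab by simp
  qed
  moreover have "even b" using \<open>even a\<close> unfolding a_def b_def by presburger
  ultimately obtain c d where cd: "a = 2 * c" "b = 2 * d" by (auto elim!: evenE)
  have "c * d = 4" using ab cd by simp
  moreover have "c + d = M" using cd unfolding a_def b_def by simp
  moreover have "(c - 1) * (d - 1) \<ge> 0" using cd \<open>a > 0\<close> \<open>b > 0\<close> by simp
  ultimately show False using \<open>M \<ge> 6\<close> by (simp add: algebra_simps)
qed

lemma exists_double_shift_mod: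
  fixes a b :: int
  assumes "0 \<le> b" "b < int m" "odd m \<or> even (b - a)"
  shows "\<exists>t. (a + 2 * t) mod int m = b"
  using assms(3)
proof
  assume "odd m"
  then obtain q where q: "int m + 1 = 2 * q" by (metis even_plus_one_iff even_of_nat dvdE)
  have "a + 2 * ((b - a) * q) = a + (b - a) * (int m + 1)" unfolding q by (simp add: algebra_simps)
  also have "\<dots> = b + (b - a) * int m" by (simp add: algebra_simps)
  finally have "(a + 2 * ((b - a) * q)) mod int m = (b + (b - a) * int m) mod int m" by simp
  then show ?thesis using assms(1,2) by auto
next
  assume "even (b - a)"
  then have "(a + 2 * ((b - a) div 2)) mod int m = b" using assms(1,2) by simp
  then show ?thesis by blast
qed

section \<open>Signless Laplacian spectra of complete multipartite graphs\<close>

lemma signless_laplacian_sum: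
  assumes "finite V" "u \<in> V"
  shows "(\<Sum>w\<in>V. signless_laplacian V adj u w * v w) =
     of_nat (graph_degree V adj u) * v u + (\<Sum>w\<in>{w\<in>V. adj u w}. v w)"
proof -
  have "(\<Sum>w\<in>V. signless_laplacian V adj u w * v w) =
      (\<Sum>w\<in>V. if u = w then of_nat (graph_degree V adj u) * v w else 0) + (\<Sum>w\<in>V. if adj u w then v w else 0)"
    unfolding signless_laplacian_def sum.distrib[symmetric] by (rule sum.cong) (auto simp: algebra_simps)
  with assms show ?thesis by (simp add: sum.inter_filter)
qed

lemma complete_bipartite_Q_integral:
  assumes fin: "finite V" and V: "V = P \<union> S" "P \<inter> S = {}"
    and adj: "\<And>u w. u \<in> V \<Longrightarrow> w \<in> V \<Longrightarrow> adj u w \<longleftrightarrow> (u \<in> P \<and> w \<in> S) \<or> (u \<in> S \<and> w \<in> P)"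
  shows "Q_integral V adj"
  unfolding Q_integral_def
proof (intro allI impI)
  fix c assume "is_eigenvalue_on V (signless_laplacian V adj) c"
  then obtain v where nz: "\<exists>u\<in>V. v u \<noteq> 0"
    and ev: "\<And>u. u \<in> V \<Longrightarrow> (\<Sum>w\<in>V. signless_laplacian V adj u w * v w) = c * v u"
    unfolding is_eigenvalue_on_def by blast
  define r s where "r = card P" and "s = card S"
  define \<alpha> \<beta> where "\<alpha> = (\<Sum>w\<in>P. v w)" and "\<beta> = (\<Sum>w\<in>S. v w)"
  have eP: "of_nat s * v u + \<beta> = c * v u" if "u \<in> P" for u
  proof -
    have "{w\<in>V. adj u w} = S" using that adj V by auto
    then show ?thesis
      using ev[of u] signless_laplacian_sum[OF fin, of u adj v] that V
      unfolding graph_degree_def s_def \<beta>_def by auto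
  qed
  have eS: "of_nat r * v u + \<alpha> = c * v u" if "u \<in> S" for u
  proof -
    have "{w\<in>V. adj u w} = P" using that adj V by auto
    then show ?thesis
      using ev[of u] signless_laplacian_sum[OF fin, of u adj v] that V
      unfolding graph_degree_def r_def \<alpha>_def by auto
  qed
  show "c \<in> \<int>"
  proof (cases "c = of_nat s \<or> c = of_nat r")
    case True then show ?thesis by (metis Ints_of_nat)
  next
    case False
    then have cs: "c - of_nat s \<noteq> 0" and cr: "c - of_nat r \<noteq> 0" by auto
    \<comment> \<open>an eigenvector away from the degrees is constant on each side\<close>
    have vP: "v u = \<beta> / (c - of_nat s)" if "u \<in> P" for u
      using eP[OF that] cs by (simp add: field_simps)
    have vS: "v u = \<alpha> / (c - of_nat r)" if "u \<in> S" for u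
      using eS[OF that] cr by (simp add: field_simps)
    have "\<alpha> = of_nat r * (\<beta> / (c - of_nat s))" unfolding \<alpha>_def r_def using vP by simp
    then have e1: "\<alpha> * (c - of_nat s) = of_nat r * \<beta>" using cs by (simp add: field_simps)
    have "\<beta> = of_nat s * (\<alpha> / (c - of_nat r))" unfolding \<beta>_def s_def using vS by simp
    then have e2: "\<beta> * (c - of_nat r) = of_nat s * \<alpha>" using cr by (simp add: field_simps)
    have "\<beta> \<noteq> 0"
    proof
      assume "\<beta> = 0"
      then have "\<alpha> = 0" using e1 cs by simp
      then show False using nz V vP vS \<open>\<beta> = 0\<close> by auto
    qed
    have "\<beta> * ((c - of_nat s) * (c - of_nat r)) = \<beta> * (c - of_nat r) * (c - of_nat s)"
      by (simp add: ac_simps)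
    also have "\<dots> = of_nat s * (\<alpha> * (c - of_nat s))" by (simp add: e2)
    also have "\<dots> = \<beta> * (of_nat s * of_nat r)" by (simp add: e1)
    finally have "(c - of_nat s) * (c - of_nat r) = of_nat s * of_nat r"
      using \<open>\<beta> \<noteq> 0\<close> by simp
    then have "c * (c - of_nat (r + s)) = 0" by (simp add: algebra_simps)
    then have "c = 0 \<or> c = of_nat (r + s)" by auto
    then show ?thesis by (metis Ints_0 Ints_of_nat)
  qed
qed

lemma complete_tripartite_eigenvalue:
  assumes fin: "finite V" and V: "V = I \<union> A \<union> B" "I \<inter> A = {}" "I \<inter> B = {}" "A \<inter> B = {}"
    and adj: "\<And>u w. u \<in> V \<Longrightarrow> w \<in> V \<Longrightarrow> adj u w \<longleftrightarrow>
       (u \<in> I \<and> w \<notin> I) \<or> (u \<in> A \<and> w \<notin> A) \<or> (u \<in> B \<and> w \<notin> B)"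
    and card: "card I = n" "card A = p" "card B = p" and "p \<ge> 1" "I \<noteq> {}"
    and root: "\<theta>\<^sup>2 - of_nat (n + 4 * p) * \<theta> + of_nat (4 * p\<^sup>2) = 0"
  shows "is_eigenvalue_on V (signless_laplacian V adj) \<theta>"
proof -
  \<comment> \<open>\<open>\<theta>\<close> is an eigenvalue of the quotient matrix \<open>[[2p, 2p], [n, n + 2p]]\<close> of the partition
    \<open>{I, A \<union> B}\<close>; \<open>v\<close> lifts its eigenvector \<open>(2p, \<theta> - 2p)\<close>\<close>
  define v where "v w = (if w \<in> I then of_nat (2 * p) else \<theta> - of_nat (2 * p))" for w
  have v_inner: "v w = of_nat (2 * p)" if "w \<in> I" for w using that v_def by simp
  have v_outer: "v w = \<theta> - of_nat (2 * p)" if "w \<notin> I" for w using that v_def by simp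
  have finite: "finite I" "finite A" "finite B" using fin V by auto
  have sum_inner: "(\<Sum>w\<in>I. v w) = of_nat n * of_nat (2 * p)"
    using card v_inner by simp
  have sum_outer: "(\<Sum>w\<in>Y. v w) = of_nat p * (\<theta> - of_nat (2 * p))" if "Y = A \<or> Y = B" for Y
  proof -
    have "(\<Sum>w\<in>Y. v w) = (\<Sum>w\<in>Y. \<theta> - of_nat (2 * p))"
      using that V v_outer by (intro sum.cong) auto
    with that card(2,3) show ?thesis by (elim disjE) simp_all
  qed
  have "(\<Sum>w\<in>V. signless_laplacian V adj u w * v w) = \<theta> * v u" if u: "u \<in> V" for u
  proof (cases "u \<in> I")
    case True
    then have nb: "{w\<in>V. adj u w} = A \<union> B" using adj V by auto
    have "graph_degree V adj u = 2 * p"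
      unfolding graph_degree_def nb using card_Un_disjoint[OF finite(2,3) V(4)] card by simp
    moreover have "(\<Sum>w\<in>A \<union> B. v w) = (\<Sum>w\<in>A. v w) + (\<Sum>w\<in>B. v w)"
      by (rule sum.union_disjoint[OF finite(2,3) V(4)])
    then have "(\<Sum>w\<in>A \<union> B. v w) = 2 * of_nat p * (\<theta> - of_nat (2 * p))"
      by (simp add: sum_outer algebra_simps)
    ultimately show ?thesis
      using signless_laplacian_sum[OF fin u, of adj v] v_inner[OF True] nb by (simp add: algebra_simps)
  next
    case False
    obtain Y where Y: "Y = A \<or> Y = B" and nb: "{w\<in>V. adj u w} = I \<union> Y"
    proof (cases "u \<in> A")
      case True
      then have "{w\<in>V. adj u w} = I \<union> B" using adj V by auto
      then show ?thesis using that by blast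
    next
      case False
      then have "{w\<in>V. adj u w} = I \<union> A" using adj V u \<open>u \<notin> I\<close> by auto
      then show ?thesis using that by blast
    qed
    have IY: "finite Y" "I \<inter> Y = {}" "card Y = p" using Y finite V(2,3) card(2,3) by auto
    have "graph_degree V adj u = n + p"
      unfolding graph_degree_def nb using card_Un_disjoint[OF finite(1) IY(1,2)] card(1) IY(3) by simp
    moreover have "(\<Sum>w\<in>I \<union> Y. v w) = (\<Sum>w\<in>I. v w) + (\<Sum>w\<in>Y. v w)"
      by (rule sum.union_disjoint[OF finite(1) IY(1,2)])
    ultimately have "(\<Sum>w\<in>V. signless_laplacian V adj u w * v w) =
        of_nat (n + p) * (\<theta> - of_nat (2 * p)) + (of_nat n * of_nat (2 * p) + of_nat p * (\<theta> - of_nat (2 * p)))"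
      by (simp add: signless_laplacian_sum[OF fin u] nb sum_inner sum_outer[OF Y] v_outer[OF False])
    also have "\<dots> = \<theta> * (\<theta> - of_nat (2 * p)) - (\<theta>\<^sup>2 - of_nat (n + 4 * p) * \<theta> + of_nat (4 * p\<^sup>2))"
      by (simp add: algebra_simps power2_eq_square)
    finally show ?thesis using root v_outer[OF False] by simp
  qed
  moreover obtain u where "u \<in> I" using \<open>I \<noteq> {}\<close> by auto
  then have "u \<in> V" "v u \<noteq> 0" using V v_inner \<open>p \<ge> 1\<close> by auto
  ultimately show ?thesis unfolding is_eigenvalue_on_def by blast
qed

lemma complete_tripartite_not_Q_integral:
  assumes fin: "finite V" and V: "V = I \<union> A \<union> B" "I \<inter> A = {}" "I \<inter> B = {}" "A \<inter> B = {}"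
    and adj: "\<And>u w. u \<in> V \<Longrightarrow> w \<in> V \<Longrightarrow> adj u w \<longleftrightarrow>
       (u \<in> I \<and> w \<notin> I) \<or> (u \<in> A \<and> w \<notin> A) \<or> (u \<in> B \<and> w \<notin> B)"
    and card: "card I = (m - 1) * p" "card A = p" "card B = p"
    and "m \<ge> 3" "p \<ge> 1" "I \<noteq> {}"
  shows "\<not> Q_integral V adj"
proof -
  have n: "(m - 1) * p + 4 * p = (m + 3) * p" using \<open>m \<ge> 3\<close> by (simp add: algebra_simps)
  define N D where "N = real ((m + 3) * p)" and "D = N\<^sup>2 - 16 * (real p)\<^sup>2"
  have "4 * real p \<le> N" unfolding N_def using \<open>m \<ge> 3\<close> by (simp add: mult_right_mono)
  then have "(4 * real p)\<^sup>2 \<le> N\<^sup>2" by (intro power_mono) auto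
  then have "D \<ge> 0" unfolding D_def by simp
  define \<theta> where "\<theta> = complex_of_real ((N + sqrt D) / 2)"
  have "((N + sqrt D) / 2)\<^sup>2 - N * ((N + sqrt D) / 2) + 4 * (real p)\<^sup>2 = (sqrt D * sqrt D - D) / 4"
    unfolding D_def by (simp add: power2_eq_square field_simps)
  then have "((N + sqrt D) / 2)\<^sup>2 - N * ((N + sqrt D) / 2) + 4 * (real p)\<^sup>2 = 0"
    using \<open>D \<ge> 0\<close> by simp
  then have "complex_of_real (((N + sqrt D) / 2)\<^sup>2 - N * ((N + sqrt D) / 2) + 4 * (real p)\<^sup>2) = 0"
    by (simp only: of_real_0)
  then have root: "\<theta>\<^sup>2 - of_nat ((m - 1) * p + 4 * p) * \<theta> + of_nat (4 * p\<^sup>2) = 0"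
    unfolding \<theta>_def n N_def by simp
  have "\<theta> \<notin> \<int>"
  proof
    assume "\<theta> \<in> \<int>"
    then obtain k where k: "\<theta> = of_int k" by (auto elim: Ints_cases)
    have "(of_int (k\<^sup>2 - int ((m + 3) * p) * k + 4 * int p ^ 2) :: complex) = 0"
      using root unfolding k n by simp
    then show False using quadratic_no_int_root[OF \<open>m \<ge> 3\<close> \<open>p \<ge> 1\<close>, of k] by (simp only: of_int_eq_0_iff)
  qed
  moreover have "is_eigenvalue_on V (signless_laplacian V adj) \<theta>"
    using complete_tripartite_eigenvalue[OF fin V adj card \<open>p \<ge> 1\<close> \<open>I \<noteq> {}\<close> root] .
  ultimately show ?thesis unfolding Q_integral_def by blast
qed

section \<open>The dihedral group\<close>

lemma dihedral_carrier_iff: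
  "(i, e) \<in> carrier (dihedral m) \<longleftrightarrow> 0 \<le> i \<and> i < int m \<and> (e = 0 \<or> e = 1)"
  unfolding dihedral_def by auto

lemma dihedral_one [simp]: "\<one>\<^bsub>dihedral m\<^esub> = (0, 0)"
  unfolding dihedral_def by simp

lemma dihedral_mult_rotation [simp]:
  "(i, 0) \<otimes>\<^bsub>dihedral m\<^esub> (j, f) = ((i + j) mod int m, f mod 2)"
  unfolding dihedral_def by simp

lemma dihedral_mult_reflection [simp]:
  "(i, 1) \<otimes>\<^bsub>dihedral m\<^esub> (j, f) = ((i - j) mod int m, (1 + f) mod 2)"
  unfolding dihedral_def by simp

lemma group_dihedral:
  assumes "m > 0"
  shows "group (dihedral m)"
proof (rule groupI)
  fix x y z
  assume "x \<in> carrier (dihedral m)" "y \<in> carrier (dihedral m)" "z \<in> carrier (dihedral m)"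
  then show "x \<otimes>\<^bsub>dihedral m\<^esub> y \<otimes>\<^bsub>dihedral m\<^esub> z = x \<otimes>\<^bsub>dihedral m\<^esub> (y \<otimes>\<^bsub>dihedral m\<^esub> z)"
    by (cases x; cases y; cases z) (auto simp: dihedral_carrier_iff mod_simps algebra_simps)
next
  fix x
  assume x: "x \<in> carrier (dihedral m)"
  show "\<exists>y\<in>carrier (dihedral m). y \<otimes>\<^bsub>dihedral m\<^esub> x = \<one>\<^bsub>dihedral m\<^esub>"
  proof (cases x)
    case (Pair i e)
    then consider "x = (i, 0)" | "x = (i, 1)" using x by (auto simp: dihedral_carrier_iff)
    then show ?thesis
    proof cases
      case 1
      then show ?thesis using assms
        by (intro bexI[of _ "((- i) mod int m, 0)"]) (auto simp: dihedral_carrier_iff mod_simps)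
    next
      case 2
      then show ?thesis using x by (intro bexI[of _ x]) auto
    qed
  qed
qed (use assms in \<open>auto simp: dihedral_carrier_iff\<close>)

lemma dihedral_inv_rotation:
  assumes "m > 0" "(i, 0) \<in> carrier (dihedral m)"
  shows "inv\<^bsub>dihedral m\<^esub> (i, 0) = ((- i) mod int m, 0)"
  using assms by (intro group.inv_equality[OF group_dihedral]) (auto simp: dihedral_carrier_iff mod_simps)

lemma dihedral_inv_reflection:
  assumes "m > 0" "(i, 1) \<in> carrier (dihedral m)"
  shows "inv\<^bsub>dihedral m\<^esub> (i, 1) = (i, 1)"
  using assms by (intro group.inv_equality[OF group_dihedral]) auto

lemma dihedral_conj_snd:
  assumes "m > 0" "d \<in> carrier (dihedral m)" "x \<in> carrier (dihedral m)"
  shows "snd (d \<otimes>\<^bsub>dihedral m\<^esub> x \<otimes>\<^bsub>dihedral m\<^esub> inv\<^bsub>dihedral m\<^esub> d) = snd x"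
  using assms
  by (cases d; cases x) (auto simp: dihedral_carrier_iff dihedral_inv_rotation dihedral_inv_reflection)

lemma dihedral_conj_reflection:
  assumes "m > 0" "(t, e) \<in> carrier (dihedral m)" "(j, 1) \<in> carrier (dihedral m)"
  shows "(t, e) \<otimes>\<^bsub>dihedral m\<^esub> (j, 1) \<otimes>\<^bsub>dihedral m\<^esub> inv\<^bsub>dihedral m\<^esub> (t, e) =
    ((if e = 0 then j + 2 * t else 2 * t - j) mod int m, 1)"
  using assms
  by (auto simp: dihedral_carrier_iff dihedral_inv_rotation dihedral_inv_reflection mod_simps algebra_simps)

lemma dihedral_rotation_pow:
  "(1, 0) [^]\<^bsub>dihedral m\<^esub> (n :: nat) = (int n mod int m, 0)"
proof (induction n)
  case (Suc n)
  then show ?case by (simp add: mod_simps add.commute)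
qed simp

section \<open>Centre, conjugacy classes and fibres of homomorphisms\<close>

lemma card_eq_mult_card_if_fibres:
  assumes "finite A" "finite B" "f ` A \<subseteq> B" "\<And>b. b \<in> B \<Longrightarrow> card {a\<in>A. f a = b} = k"
  shows "card A = k * card B"
proof -
  have "A = (\<Union>b\<in>B. {a\<in>A. f a = b})" using assms(3) by auto
  then have "card A = card (\<Union>b\<in>B. {a\<in>A. f a = b})" by simp
  also have "\<dots> = (\<Sum>b\<in>B. card {a\<in>A. f a = b})"
    using assms(1,2) by (intro card_UN_disjoint) auto
  also have "\<dots> = k * card B" using assms(4) by simp
  finally show ?thesis .
qed

context group
begin

lemma grp_center_subset: "grp_center G \<subseteq> carrier G"
  unfolding grp_center_def by auto

lemma grp_center_commute: "z \<in> grp_center G \<Longrightarrow> g \<in> carrier G \<Longrightarrow> z \<otimes> g = g \<otimes> z"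
  unfolding grp_center_def by auto

lemma grp_centerI: "z \<in> carrier G \<Longrightarrow> (\<And>g. g \<in> carrier G \<Longrightarrow> z \<otimes> g = g \<otimes> z) \<Longrightarrow> z \<in> grp_center G"
  unfolding grp_center_def by auto

lemma grp_center_normal: "grp_center G \<lhd> G"
proof (rule normalI)
  show "subgroup (grp_center G) G"
  proof (rule subgroupI)
    show "grp_center G \<noteq> {}" using grp_centerI[of \<one>] by auto
  next
    fix a assume a: "a \<in> grp_center G"
    then have "a \<in> carrier G" using grp_center_subset by auto
    moreover have "inv a \<otimes> g = g \<otimes> inv a" if "g \<in> carrier G" for g
      using grp_center_commute[OF a, of "inv g"] that \<open>a \<in> carrier G\<close>
      by (metis inv_closed inv_inv inv_mult_group)
    ultimately show "inv a \<in> grp_center G" by (simp add: grp_centerI)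
  next
    fix a b assume a: "a \<in> grp_center G" and b: "b \<in> grp_center G"
    then have ab: "a \<in> carrier G" "b \<in> carrier G" using grp_center_subset by auto
    have "a \<otimes> b \<otimes> g = g \<otimes> (a \<otimes> b)" if "g \<in> carrier G" for g
    proof -
      have "a \<otimes> b \<otimes> g = a \<otimes> (g \<otimes> b)" using grp_center_commute[OF b that] ab that by (simp add: m_assoc)
      also have "\<dots> = g \<otimes> (a \<otimes> b)" using grp_center_commute[OF a that] ab that by (simp flip: m_assoc)
      finally show ?thesis .
    qed
    then show "a \<otimes> b \<in> grp_center G" using ab by (simp add: grp_centerI)
  qed (rule grp_center_subset)
  show "\<forall>x\<in>carrier G. grp_center G #> x = x <# grp_center G"
    using grp_center_commute unfolding r_coset_def l_coset_def by auto
qed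

lemma inv_cancel_left [simp]: "a \<in> carrier G \<Longrightarrow> b \<in> carrier G \<Longrightarrow> inv a \<otimes> (a \<otimes> b) = b"
  by (simp flip: m_assoc)

lemma inv_cancel_left' [simp]: "a \<in> carrier G \<Longrightarrow> b \<in> carrier G \<Longrightarrow> a \<otimes> (inv a \<otimes> b) = b"
  by (simp flip: m_assoc)

lemma mult_commute_of_commute:
  assumes "a \<in> carrier G" "b \<in> carrier G" "c \<in> carrier G"
    and "a \<otimes> c = c \<otimes> a" "b \<otimes> c = c \<otimes> b"
  shows "a \<otimes> b \<otimes> c = c \<otimes> (a \<otimes> b)"
proof -
  have "a \<otimes> b \<otimes> c = a \<otimes> c \<otimes> b" using assms(1-3) by (simp add: m_assoc assms(5))
  also have "\<dots> = c \<otimes> a \<otimes> b" by (simp add: assms(4))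
  finally show ?thesis using assms(1-3) by (simp add: m_assoc)
qed

lemma conj_eq_conj_iff:
  assumes "a \<in> carrier G" "b \<in> carrier G" "x \<in> carrier G"
  shows "a \<otimes> x \<otimes> inv a = b \<otimes> x \<otimes> inv b \<longleftrightarrow> inv b \<otimes> a \<otimes> x = x \<otimes> (inv b \<otimes> a)"
proof
  assume "a \<otimes> x \<otimes> inv a = b \<otimes> x \<otimes> inv b"
  then have "inv b \<otimes> (a \<otimes> x \<otimes> inv a) \<otimes> a = inv b \<otimes> (b \<otimes> x \<otimes> inv b) \<otimes> a" by simp
  then show "inv b \<otimes> a \<otimes> x = x \<otimes> (inv b \<otimes> a)" using assms by (simp add: m_assoc)
next
  assume "inv b \<otimes> a \<otimes> x = x \<otimes> (inv b \<otimes> a)"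
  then have "b \<otimes> (inv b \<otimes> a \<otimes> x) \<otimes> inv a = b \<otimes> (x \<otimes> (inv b \<otimes> a)) \<otimes> inv a" by simp
  then show "a \<otimes> x \<otimes> inv a = b \<otimes> x \<otimes> inv b" using assms by (simp add: m_assoc inv_mult_group)
qed

lemma conj_class_iff: "x \<in> conj_class G a \<longleftrightarrow> (\<exists>k\<in>carrier G. x = k \<otimes> a \<otimes> inv k)"
  unfolding conj_class_def by auto

lemma conj_class_self: "g \<in> carrier G \<Longrightarrow> g \<in> conj_class G g"
  unfolding conj_class_def by (auto intro!: exI[of _ \<one>])

lemma conj_class_subset_carrier: "g \<in> carrier G \<Longrightarrow> conj_class G g \<subseteq> carrier G"
  unfolding conj_class_def by auto

lemma conj_class_eq:
  assumes a: "a \<in> carrier G" and x: "x \<in> conj_class G a"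
  shows "conj_class G x = conj_class G a"
proof -
  obtain k where k: "k \<in> carrier G" "x = k \<otimes> a \<otimes> inv k" using x conj_class_iff by blast
  show ?thesis
  proof (intro equalityI subsetI)
    fix y assume "y \<in> conj_class G x"
    then obtain h where h: "h \<in> carrier G" "y = h \<otimes> x \<otimes> inv h" using conj_class_iff by blast
    then have "y = (h \<otimes> k) \<otimes> a \<otimes> inv (h \<otimes> k)" using k a by (simp add: m_assoc inv_mult_group)
    then show "y \<in> conj_class G a" using h k by (auto simp: conj_class_iff)
  next
    fix y assume "y \<in> conj_class G a"
    then obtain h where h: "h \<in> carrier G" "y = h \<otimes> a \<otimes> inv h" using conj_class_iff by blast
    then have "y = (h \<otimes> inv k) \<otimes> x \<otimes> inv (h \<otimes> inv k)" using k a by (simp add: m_assoc inv_mult_group)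
    then show "y \<in> conj_class G x" using h k by (auto simp: conj_class_iff)
  qed
qed

lemma conj_class_disjoint:
  "a \<in> carrier G \<Longrightarrow> b \<in> carrier G \<Longrightarrow> conj_class G a \<noteq> conj_class G b \<Longrightarrow>
    conj_class G a \<inter> conj_class G b = {}"
  using conj_class_eq by blast

lemma conj_class_in_image_iff:
  assumes "S \<subseteq> carrier G" "\<And>s. s \<in> S \<Longrightarrow> conj_class G s \<subseteq> S" "g \<in> carrier G"
  shows "conj_class G g \<in> conj_class G ` S \<longleftrightarrow> g \<in> S"
  using assms conj_class_self by blast

lemma conj_class_image_disjoint:
  assumes "S \<subseteq> carrier G" "T \<subseteq> carrier G" "S \<inter> T = {}"
    and "\<And>t. t \<in> T \<Longrightarrow> conj_class G t \<subseteq> T"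
  shows "conj_class G ` S \<inter> conj_class G ` T = {}"
  using conj_class_in_image_iff[OF assms(2,4)] assms(1,3) by blast

lemma conj_class_not_center:
  assumes "g \<in> carrier G" "g \<notin> grp_center G" "l \<in> conj_class G g"
  shows "l \<notin> grp_center G"
proof
  assume l: "l \<in> grp_center G"
  obtain k where k: "k \<in> carrier G" "l = k \<otimes> g \<otimes> inv k" using assms(3) conj_class_iff by blast
  have lc: "l \<in> carrier G" using l grp_center_subset by auto
  have "g = inv k \<otimes> l \<otimes> k" using k assms(1) by (simp add: m_assoc)
  also have "\<dots> = inv k \<otimes> (k \<otimes> l)" using grp_center_commute[OF l k(1)] k lc by (simp add: m_assoc)
  also have "\<dots> = l" using k lc by simp
  finally have "l = g" by simp
  then show False using assms(2) l by simp
qed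

lemma card_conj_class_image:
  assumes "finite (carrier G)" "S \<subseteq> carrier G" "\<And>s. s \<in> S \<Longrightarrow> conj_class G s \<subseteq> S"
    and "\<And>s. s \<in> S \<Longrightarrow> card (conj_class G s) = k"
  shows "k * card (conj_class G ` S) = card S"
proof -
  have S: "\<Union>(conj_class G ` S) = S" using assms(2,3) conj_class_self by blast
  have "k * card (conj_class G ` S) = card (\<Union>(conj_class G ` S))"
  proof (rule card_partition)
    show "finite (\<Union>(conj_class G ` S))" using S assms(1,2) finite_subset by auto
    then show "finite (conj_class G ` S)" by (rule finite_UnionD)
    show "\<And>c. c \<in> conj_class G ` S \<Longrightarrow> card c = k" using assms(4) by blast
    show "\<And>c1 c2. c1 \<in> conj_class G ` S \<Longrightarrow> c2 \<in> conj_class G ` S \<Longrightarrow> c1 \<noteq> c2 \<Longrightarrow> c1 \<inter> c2 = {}"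
      using assms(2) conj_class_disjoint by blast
  qed
  then show ?thesis using S by simp
qed

end

context group_hom
begin

lemma fibre_eq_kernel_rcos:
  assumes "g \<in> carrier G"
  shows "{x \<in> carrier G. h x = h g} = kernel G H h #> g"
proof -
  have "x \<in> kernel G H h #> g" if "x \<in> carrier G" "h x = h g" for x
  proof -
    have "x \<otimes> inv g \<in> kernel G H h" using that assms by (simp add: kernel_def)
    then show ?thesis using that assms unfolding r_coset_def
      by (intro UN_I[of "x \<otimes> inv g"]) (auto simp: G.m_assoc)
  qed
  then show ?thesis using assms by (auto simp: kernel_def r_coset_def)
qed

lemma card_vimage_eq:
  assumes "finite (carrier G)" "T \<subseteq> h ` carrier G"
  shows "card {x \<in> carrier G. h x \<in> T} = card (kernel G H h) * card T"
proof (rule card_eq_mult_card_if_fibres)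
  show "finite T" using assms finite_subset by blast
  fix y assume "y \<in> T"
  then obtain g where g: "g \<in> carrier G" "y = h g" using assms(2) by auto
  then have "{x \<in> {x \<in> carrier G. h x \<in> T}. h x = y} = {x \<in> carrier G. h x = h g}"
    using \<open>y \<in> T\<close> by auto
  then have "{x \<in> {x \<in> carrier G. h x \<in> T}. h x = y} = kernel G H h #> g"
    using fibre_eq_kernel_rcos[OF g(1)] by simp
  then show "card {x \<in> {x \<in> carrier G. h x \<in> T}. h x = y} = card (kernel G H h)"
    using G.card_rcosets_equal[of "kernel G H h #> g" "kernel G H h"] g subgroup.subset[OF subgroup_kernel]
    by (simp add: G.rcosetsI)
qed (use assms in auto)

end

lemma NCCC_adj_sym: "NCCC_adj G C D \<Longrightarrow> NCCC_adj G D C"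
  unfolding NCCC_adj_def by metis

section \<open>Groups whose central quotient is dihedral\<close>

locale central_dihedral_quotient = group_hom G "dihedral m" \<pi> for G (structure) and m \<pi> +
  assumes finite_carrier: "finite (carrier G)"
    and three_le_m: "3 \<le> m"
    and surj: "\<pi> ` carrier G = carrier (dihedral m)"
    and kernel_eq_center: "kernel G (dihedral m) \<pi> = grp_center G"
begin

definition rotations :: "'a set" where
  "rotations = {g \<in> carrier G. snd (\<pi> g) = 0}"

definition reflections :: "'a set" where
  "reflections = {g \<in> carrier G. snd (\<pi> g) = 1}"

definition reflections_parity :: "int \<Rightarrow> 'a set" where
  "reflections_parity c = {g \<in> reflections. fst (\<pi> g) mod 2 = c}"

abbreviation rotation_classes :: "'a set set" where
  "rotation_classes \<equiv> conj_class G ` (rotations - grp_center G)"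

abbreviation parity_classes :: "int \<Rightarrow> 'a set set" where
  "parity_classes c \<equiv> conj_class G ` reflections_parity c"

lemma m_pos: "0 < m"
  using three_le_m by simp

lemma \<pi>_eq_zero_iff: "g \<in> carrier G \<Longrightarrow> \<pi> g = (0, 0) \<longleftrightarrow> g \<in> grp_center G"
  using kernel_eq_center unfolding kernel_def by auto

lemma \<pi>_eq_iff:
  assumes "a \<in> carrier G" "b \<in> carrier G"
  shows "\<pi> a = \<pi> b \<longleftrightarrow> inv a \<otimes> b \<in> grp_center G"
proof -
  have "\<pi> (inv a \<otimes> b) = \<one>\<^bsub>dihedral m\<^esub> \<longleftrightarrow> \<pi> a = \<pi> b"
    using assms by (metis H.inv_equality H.inv_inv H.l_inv hom_closed hom_inv hom_mult G.inv_closed)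
  then show ?thesis using \<pi>_eq_zero_iff[of "inv a \<otimes> b"] assms by simp
qed

lemma \<pi>_eq_imp_commute:
  assumes "a \<in> carrier G" "b \<in> carrier G" "\<pi> a = \<pi> b"
  shows "a \<otimes> b = b \<otimes> a"
proof -
  define z where "z = inv a \<otimes> b"
  have z: "z \<in> grp_center G" "z \<in> carrier G" using assms \<pi>_eq_iff G.grp_center_subset unfolding z_def by auto
  have b: "b = a \<otimes> z" using assms unfolding z_def by simp
  show ?thesis using G.grp_center_commute[OF z(1) assms(1)] z assms(1) unfolding b by (simp add: G.m_assoc)
qed

lemma \<pi>_mult_center: "a \<in> carrier G \<Longrightarrow> z \<in> grp_center G \<Longrightarrow> \<pi> (a \<otimes> z) = \<pi> a"
  using \<pi>_eq_zero_iff[of z] G.grp_center_subset H.r_one[of "\<pi> a"] by auto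

lemma snd_\<pi>_cases: "g \<in> carrier G \<Longrightarrow> snd (\<pi> g) = 0 \<or> snd (\<pi> g) = 1"
  using hom_closed[of g] by (cases "\<pi> g") (auto simp: dihedral_carrier_iff)

lemma snd_\<pi>_mult: "a \<in> carrier G \<Longrightarrow> b \<in> carrier G \<Longrightarrow> snd (\<pi> (a \<otimes> b)) = (snd (\<pi> a) + snd (\<pi> b)) mod 2"
  using snd_\<pi>_cases[of a] by (cases "\<pi> a"; cases "\<pi> b") auto

lemma snd_\<pi>_inv: "a \<in> carrier G \<Longrightarrow> snd (\<pi> (inv a)) = snd (\<pi> a)"
  using hom_closed[of a] m_pos
  by (cases "\<pi> a") (auto simp: dihedral_carrier_iff dihedral_inv_rotation dihedral_inv_reflection)

lemma rotations_subset: "rotations \<subseteq> carrier G"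
  unfolding rotations_def by auto

lemma reflections_subset: "reflections \<subseteq> carrier G"
  unfolding reflections_def by auto

lemma rotation_or_reflection: "g \<in> carrier G \<Longrightarrow> g \<in> rotations \<or> g \<in> reflections"
  unfolding rotations_def reflections_def using snd_\<pi>_cases by auto

lemma rotations_reflections_disjoint: "rotations \<inter> reflections = {}"
  unfolding rotations_def reflections_def by auto

lemma rotation_iff_not_reflection: "g \<in> carrier G \<Longrightarrow> g \<in> rotations \<longleftrightarrow> g \<notin> reflections"
  using rotation_or_reflection rotations_reflections_disjoint by blast

lemma center_subset_rotations: "grp_center G \<subseteq> rotations"
proof
  fix z assume "z \<in> grp_center G"
  then have "z \<in> carrier G" "\<pi> z = (0, 0)" using \<pi>_eq_zero_iff G.grp_center_subset by auto
  then show "z \<in> rotations" unfolding rotations_def by simp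
qed

lemma rotations_mult: "a \<in> rotations \<Longrightarrow> b \<in> rotations \<Longrightarrow> a \<otimes> b \<in> rotations"
  unfolding rotations_def by (auto simp: snd_\<pi>_mult simp del: hom_mult)

lemma rotations_inv: "a \<in> rotations \<Longrightarrow> inv a \<in> rotations"
  unfolding rotations_def by (auto simp: snd_\<pi>_inv simp del: hom_inv)

lemma reflections_inv_mult: "a \<in> reflections \<Longrightarrow> b \<in> reflections \<Longrightarrow> inv a \<otimes> b \<in> rotations"
  unfolding rotations_def reflections_def by (auto simp: snd_\<pi>_mult snd_\<pi>_inv simp del: hom_mult hom_inv)

lemma reflections_mult_inv: "a \<in> reflections \<Longrightarrow> b \<in> reflections \<Longrightarrow> a \<otimes> inv b \<in> rotations"
  unfolding rotations_def reflections_def by (auto simp: snd_\<pi>_mult snd_\<pi>_inv simp del: hom_mult hom_inv)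

lemma snd_\<pi>_conj: "k \<in> carrier G \<Longrightarrow> g \<in> carrier G \<Longrightarrow> snd (\<pi> (k \<otimes> g \<otimes> inv k)) = snd (\<pi> g)"
  using dihedral_conj_snd[OF m_pos] by simp

lemma \<pi>_conj_reflection:
  assumes k: "k \<in> carrier G" and g: "g \<in> reflections"
  shows "\<pi> (k \<otimes> g \<otimes> inv k) =
    ((if k \<in> rotations then fst (\<pi> g) + 2 * fst (\<pi> k) else 2 * fst (\<pi> k) - fst (\<pi> g)) mod int m, 1)"
proof -
  obtain t e where te: "\<pi> k = (t, e)" by fastforce
  obtain j where j: "\<pi> g = (j, 1)" using g unfolding reflections_def by (cases "\<pi> g") auto
  have "\<pi> (k \<otimes> g \<otimes> inv k) = (t, e) \<otimes>\<^bsub>dihedral m\<^esub> (j, 1) \<otimes>\<^bsub>dihedral m\<^esub> inv\<^bsub>dihedral m\<^esub> (t, e)"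
    using k g reflections_subset te j by auto
  also have "\<dots> = ((if e = 0 then j + 2 * t else 2 * t - j) mod int m, 1)"
    using hom_closed[of k] hom_closed[of g] k g reflections_subset te j m_pos
    by (intro dihedral_conj_reflection) auto
  finally show ?thesis using k te j unfolding rotations_def by auto
qed

lemma conj_class_rotations: "g \<in> rotations \<Longrightarrow> conj_class G g \<subseteq> rotations"
  unfolding rotations_def using snd_\<pi>_conj by (auto simp: G.conj_class_iff)

lemma conj_class_reflections: "g \<in> reflections \<Longrightarrow> conj_class G g \<subseteq> reflections"
  unfolding reflections_def using snd_\<pi>_conj by (auto simp: G.conj_class_iff)

lemma exists_preimage:
  assumes "(i, e) \<in> carrier (dihedral m)"
  obtains g where "g \<in> carrier G" "\<pi> g = (i, e)"
  using assms surj by (metis imageE)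

lemma card_center_pos: "card (grp_center G) > 0"
proof -
  have "\<one> \<in> grp_center G" by (rule G.grp_centerI) auto
  moreover have "finite (grp_center G)" using finite_carrier G.grp_center_subset by (rule finite_subset[rotated])
  ultimately show ?thesis by (auto simp: card_gt_0_iff)
qed

lemma card_filter_\<pi>:
  "card {g \<in> carrier G. P (\<pi> g)} = card (grp_center G) * card {d \<in> carrier (dihedral m). P d}"
proof -
  define T where "T = {d \<in> carrier (dihedral m). P d}"
  have "{g \<in> carrier G. P (\<pi> g)} = {g \<in> carrier G. \<pi> g \<in> T}"
    unfolding T_def using hom_closed by auto
  moreover have "T \<subseteq> \<pi> ` carrier G" unfolding T_def using surj by simp
  ultimately show ?thesis using card_vimage_eq[OF finite_carrier, of T] kernel_eq_center by (simp add: T_def)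
qed

lemma card_rotations: "card rotations = m * card (grp_center G)"
proof -
  have "{d \<in> carrier (dihedral m). snd d = 0} = {0..<int m} \<times> {0}"
    by (auto simp: dihedral_carrier_iff)
  then show ?thesis
    unfolding rotations_def using card_filter_\<pi>[of "\<lambda>d. snd d = 0"] by (simp add: card_cartesian_product)
qed

lemma card_reflections_parity:
  assumes "even m" "c = 0 \<or> c = 1"
  shows "card (reflections_parity c) = (m div 2) * card (grp_center G)"
proof -
  have "{d \<in> carrier (dihedral m). snd d = 1 \<and> fst d mod 2 = c} = (\<lambda>t. (2 * t + c, 1)) ` {0..<int m div 2}"
  proof (intro equalityI subsetI)
    fix d assume "d \<in> {d \<in> carrier (dihedral m). snd d = 1 \<and> fst d mod 2 = c}"
    then obtain i where "d = (i, 1)" "0 \<le> i" "i < int m" "i mod 2 = c"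
      by (cases d) (auto simp: dihedral_carrier_iff)
    moreover have "i = 2 * (i div 2) + c" "i div 2 < int m div 2"
      using calculation assms by presburger+
    ultimately show "d \<in> (\<lambda>t. (2 * t + c, 1)) ` {0..<int m div 2}"
      by (intro rev_image_eqI[of "i div 2"]) auto
  qed (use assms in \<open>auto simp: dihedral_carrier_iff\<close>)
  moreover have "card ((\<lambda>t. (2 * t + c, 1::int)) ` {0..<int m div 2}) = m div 2"
    by (simp add: card_image inj_on_def)
  ultimately show ?thesis
    unfolding reflections_parity_def reflections_def
    using card_filter_\<pi>[of "\<lambda>d. snd d = 1 \<and> fst d mod 2 = c"] by simp
qed

lemma rotations_commute:
  assumes g: "g \<in> rotations" and h: "h \<in> rotations"
  shows "g \<otimes> h = h \<otimes> g"
proof -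
  obtain x where x: "x \<in> carrier G" "\<pi> x = (1, 0)"
    using exists_preimage[of 1 0] three_le_m by (auto simp: dihedral_carrier_iff)
  have decompose: "\<exists>n. \<exists>z\<in>grp_center G. r = x [^] (n :: nat) \<otimes> z" if r: "r \<in> rotations" for r
  proof -
    obtain i where i: "\<pi> r = (i, 0)" "0 \<le> i" "i < int m"
      using r hom_closed[of r] unfolding rotations_def by (cases "\<pi> r") (auto simp: dihedral_carrier_iff)
    then obtain n where n: "\<pi> r = (int n, 0)" "n < m" by (metis nat_0_le nat_less_iff)
    have "\<pi> (x [^] n) = \<pi> r" using x n by (simp add: hom_nat_pow dihedral_rotation_pow)
    then have "inv (x [^] n) \<otimes> r \<in> grp_center G" using \<pi>_eq_iff x r rotations_subset by auto
    moreover have "r = x [^] n \<otimes> (inv (x [^] n) \<otimes> r)" using x r rotations_subset by auto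
    ultimately show ?thesis by blast
  qed
  obtain a z1 where z1: "z1 \<in> grp_center G" and ga: "g = x [^] (a :: nat) \<otimes> z1" using decompose[OF g] by blast
  obtain b z2 where z2: "z2 \<in> grp_center G" and hb: "h = x [^] (b :: nat) \<otimes> z2" using decompose[OF h] by blast
  have car: "x [^] a \<in> carrier G" "x [^] b \<in> carrier G" "z1 \<in> carrier G" "z2 \<in> carrier G"
    using x z1 z2 G.grp_center_subset by auto
  have "x [^] a \<otimes> x [^] b = x [^] b \<otimes> x [^] a" using x by (simp add: G.nat_pow_mult add.commute)
  then have "x [^] b \<otimes> z2 \<otimes> x [^] a = x [^] a \<otimes> (x [^] b \<otimes> z2)"
    using car G.grp_center_commute[OF z2 car(1)] by (intro G.mult_commute_of_commute) auto
  then have "x [^] a \<otimes> z1 \<otimes> h = h \<otimes> (x [^] a \<otimes> z1)"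
    unfolding hb using car G.grp_center_commute[OF z1] by (intro G.mult_commute_of_commute) auto
  then show ?thesis unfolding ga .
qed

lemma rotation_reflection_not_commute:
  assumes k: "k \<in> rotations" "k \<notin> grp_center G" and l: "l \<in> reflections"
  shows "k \<otimes> l \<noteq> l \<otimes> k"
proof
  assume kl: "k \<otimes> l = l \<otimes> k"
  have car: "k \<in> carrier G" "l \<in> carrier G" using k l rotations_subset reflections_subset by auto
  have "a \<otimes> k = k \<otimes> a" if a: "a \<in> carrier G" for a
  proof (cases "a \<in> rotations")
    case True
    then show ?thesis using rotations_commute k by simp
  next
    case False
    define r where "r = inv l \<otimes> a"
    have r: "r \<in> rotations" "r \<in> carrier G"
      using a l False rotation_or_reflection reflections_inv_mult rotations_subset unfolding r_def by auto
    have "l \<otimes> r \<otimes> k = k \<otimes> (l \<otimes> r)"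
      using car r kl rotations_commute[OF r(1) k(1)] by (intro G.mult_commute_of_commute) auto
    moreover have "a = l \<otimes> r" using car a unfolding r_def by simp
    ultimately show ?thesis by simp
  qed
  then show False using k car G.grp_centerI by metis
qed

lemma conj_class_rotation:
  assumes g: "g \<in> rotations" "g \<notin> grp_center G" and c: "c \<in> reflections"
  shows "conj_class G g = {g, c \<otimes> g \<otimes> inv c}" "g \<noteq> c \<otimes> g \<otimes> inv c"
proof -
  have car: "g \<in> carrier G" "c \<in> carrier G" using g c rotations_subset reflections_subset by auto
  have fix_rotation: "k \<otimes> g \<otimes> inv k = g" if "k \<in> rotations" for k
    using G.conj_eq_conj_iff[of k \<one> g] that car rotations_subset rotations_commute[OF that g(1)] by auto
  show "conj_class G g = {g, c \<otimes> g \<otimes> inv c}"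
  proof (intro equalityI subsetI)
    fix y assume "y \<in> conj_class G g"
    then obtain k where k: "k \<in> carrier G" "y = k \<otimes> g \<otimes> inv k" using G.conj_class_iff by blast
    show "y \<in> {g, c \<otimes> g \<otimes> inv c}"
    proof (cases "k \<in> rotations")
      case True
      then show ?thesis using fix_rotation k by simp
    next
      case False
      then have r: "inv c \<otimes> k \<in> rotations" using k c rotation_or_reflection reflections_inv_mult by blast
      have "y = c \<otimes> ((inv c \<otimes> k) \<otimes> g \<otimes> inv (inv c \<otimes> k)) \<otimes> inv c"
        using k car by (simp add: G.m_assoc G.inv_mult_group)
      then show ?thesis using fix_rotation[OF r] by simp
    qed
  qed (use car G.conj_class_self G.conj_class_iff in auto)
  show "g \<noteq> c \<otimes> g \<otimes> inv c"
    using G.conj_eq_conj_iff[of c \<one> g] car rotation_reflection_not_commute[OF g c] by auto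
qed

lemma card_conj_class_rotation:
  assumes "g \<in> rotations" "g \<notin> grp_center G"
  shows "card (conj_class G g) = 2"
proof -
  obtain c where "c \<in> carrier G" "\<pi> c = (0, 1)"
    using exists_preimage[of 0 1] m_pos by (auto simp: dihedral_carrier_iff)
  then have "c \<in> reflections" unfolding reflections_def by simp
  then show ?thesis using conj_class_rotation[OF assms] by simp
qed

lemma conj_by_rotation_eq_iff:
  assumes r: "r \<in> rotations" "r' \<in> rotations" and h: "h \<in> reflections"
  shows "r \<otimes> h \<otimes> inv r = r' \<otimes> h \<otimes> inv r' \<longleftrightarrow> inv r' \<otimes> r \<in> grp_center G"
proof -
  have car: "r \<in> carrier G" "r' \<in> carrier G" "h \<in> carrier G"
    using r h rotations_subset reflections_subset by auto
  have "inv r' \<otimes> r \<in> rotations" using r rotations_mult rotations_inv by blast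
  then have "inv r' \<otimes> r \<otimes> h = h \<otimes> (inv r' \<otimes> r) \<longleftrightarrow> inv r' \<otimes> r \<in> grp_center G"
    using rotation_reflection_not_commute[OF _ _ h] G.grp_center_commute[of "inv r' \<otimes> r" h] car by auto
  then show ?thesis using G.conj_eq_conj_iff[OF car(1,2,3)] by simp
qed

lemma conj_class_reflection_eq_image:
  assumes h: "h \<in> reflections"
  shows "conj_class G h = (\<lambda>r. r \<otimes> h \<otimes> inv r) ` rotations"
proof (intro equalityI subsetI)
  have hc: "h \<in> carrier G" using h reflections_subset by auto
  fix y assume "y \<in> conj_class G h"
  then obtain k where k: "k \<in> carrier G" "y = k \<otimes> h \<otimes> inv k" using G.conj_class_iff by blast
  show "y \<in> (\<lambda>r. r \<otimes> h \<otimes> inv r) ` rotations"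
  proof (cases "k \<in> rotations")
    case False
    then have r: "k \<otimes> inv h \<in> rotations" using k h rotation_or_reflection reflections_mult_inv by blast
    have "y = (k \<otimes> inv h) \<otimes> h \<otimes> inv (k \<otimes> inv h)"
      unfolding k(2) using k hc by (simp add: G.m_assoc G.inv_mult_group)
    then show ?thesis using r by blast
  qed (use k in auto)
qed (use rotations_subset G.conj_class_iff in auto)

lemma card_conj_by_rotation_fibre:
  assumes h: "h \<in> reflections" and r0: "r0 \<in> rotations"
  shows "card {r \<in> rotations. r \<otimes> h \<otimes> inv r = r0 \<otimes> h \<otimes> inv r0} = card (grp_center G)"
proof -
  have r0c: "r0 \<in> carrier G" using r0 rotations_subset by auto
  have "{r \<in> rotations. r \<otimes> h \<otimes> inv r = r0 \<otimes> h \<otimes> inv r0} = (\<lambda>z. r0 \<otimes> z) ` grp_center G"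
  proof (intro equalityI subsetI)
    fix r assume "r \<in> {r \<in> rotations. r \<otimes> h \<otimes> inv r = r0 \<otimes> h \<otimes> inv r0}"
    then have "r \<in> rotations" "inv r0 \<otimes> r \<in> grp_center G"
      using conj_by_rotation_eq_iff[OF _ r0 h] by auto
    moreover have "r = r0 \<otimes> (inv r0 \<otimes> r)" using calculation r0c rotations_subset by auto
    ultimately show "r \<in> (\<lambda>z. r0 \<otimes> z) ` grp_center G" by blast
  next
    fix r assume "r \<in> (\<lambda>z. r0 \<otimes> z) ` grp_center G"
    then obtain z where z: "z \<in> grp_center G" "r = r0 \<otimes> z" by auto
    then have "r \<in> rotations" using r0 center_subset_rotations rotations_mult by auto
    moreover have "inv r0 \<otimes> r \<in> grp_center G" using z r0c G.grp_center_subset by auto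
    ultimately show "r \<in> {r \<in> rotations. r \<otimes> h \<otimes> inv r = r0 \<otimes> h \<otimes> inv r0}"
      using conj_by_rotation_eq_iff[OF _ r0 h] by auto
  qed
  moreover have "inj_on (\<lambda>z. r0 \<otimes> z) (grp_center G)"
  proof (rule inj_onI)
    fix z z' assume "z \<in> grp_center G" "z' \<in> grp_center G" "r0 \<otimes> z = r0 \<otimes> z'"
    then show "z = z'" using G.l_cancel[of r0 z z'] r0c G.grp_center_subset by auto
  qed
  ultimately show ?thesis by (simp add: card_image)
qed

lemma card_conj_class_reflection:
  assumes h: "h \<in> reflections"
  shows "card (conj_class G h) = m"
proof -
  have "card rotations = card (grp_center G) * card (conj_class G h)"
  proof (rule card_eq_mult_card_if_fibres[where f = "\<lambda>r. r \<otimes> h \<otimes> inv r"])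
    show "finite rotations" using finite_carrier rotations_subset by (rule finite_subset[rotated])
    show "finite (conj_class G h)"
      using finite_carrier G.conj_class_subset_carrier h reflections_subset by (blast intro: finite_subset)
  qed (use conj_class_reflection_eq_image[OF h] card_conj_by_rotation_fibre[OF h] in auto)
  then show ?thesis using card_rotations card_center_pos by simp
qed

lemma conj_class_reflection_shift:
  assumes g: "g \<in> reflections"
  obtains l where "l \<in> conj_class G g" "\<pi> l = ((fst (\<pi> g) + 2 * t) mod int m, 1)"
proof -
  obtain k where k: "k \<in> carrier G" "\<pi> k = (t mod int m, 0)"
    using exists_preimage[of "t mod int m" 0] m_pos by (auto simp: dihedral_carrier_iff)
  then have "k \<in> rotations" unfolding rotations_def by simp
  then have "\<pi> (k \<otimes> g \<otimes> inv k) = ((fst (\<pi> g) + 2 * (t mod int m)) mod int m, 1)"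
    using \<pi>_conj_reflection[OF k(1) g] k by simp
  also have "\<dots> = ((fst (\<pi> g) + 2 * t) mod int m, 1)"
    by (metis mod_add_right_eq mod_mult_right_eq)
  finally show thesis using that k by (auto simp: G.conj_class_iff)
qed

lemma conj_class_reflection_parity:
  assumes "even m" and g: "g \<in> reflections" and l: "l \<in> conj_class G g"
  shows "fst (\<pi> l) mod 2 = fst (\<pi> g) mod 2"
proof -
  obtain k where k: "k \<in> carrier G" "l = k \<otimes> g \<otimes> inv k" using l G.conj_class_iff by blast
  have "(2::int) dvd int m" using \<open>even m\<close> by simp
  then show ?thesis using \<pi>_conj_reflection[OF k(1) g] k by (auto simp: mod_mod_cancel) presburger
qed

lemma not_NCCC_adj_rotations:
  assumes "g \<in> rotations" "h \<in> rotations"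
  shows "\<not> NCCC_adj G (conj_class G g) (conj_class G h)"
  using assms rotations_subset rotations_commute G.conj_class_self unfolding NCCC_adj_def by blast

lemma NCCC_adj_rotation_reflection:
  assumes g: "g \<in> rotations" "g \<notin> grp_center G" and h: "h \<in> reflections"
  shows "NCCC_adj G (conj_class G g) (conj_class G h)"
proof -
  have car: "g \<in> carrier G" "h \<in> carrier G" using g h rotations_subset reflections_subset by auto
  have "k \<otimes> l \<noteq> l \<otimes> k" if "k \<in> conj_class G g" "l \<in> conj_class G h" for k l
    using that rotation_reflection_not_commute conj_class_rotations[OF g(1)] conj_class_reflections[OF h]
      G.conj_class_not_center[OF car(1) g(2)] by blast
  moreover have "conj_class G g \<noteq> conj_class G h"
    using G.conj_class_self[OF car(1)] conj_class_reflections[OF h] g(1) rotations_reflections_disjoint by auto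
  ultimately show ?thesis unfolding NCCC_adj_def by blast
qed

lemma NCCC_adj_reflections_iff:
  assumes g: "g \<in> reflections" and h: "h \<in> reflections"
  shows "NCCC_adj G (conj_class G g) (conj_class G h) \<longleftrightarrow>
    even m \<and> fst (\<pi> g) mod 2 \<noteq> fst (\<pi> h) mod 2"
proof
  assume adj: "NCCC_adj G (conj_class G g) (conj_class G h)"
  show "even m \<and> fst (\<pi> g) mod 2 \<noteq> fst (\<pi> h) mod 2"
  proof (rule ccontr)
    assume "\<not> ?thesis"
    \<comment> \<open>then some conjugate of \<open>h\<close> has the same image as \<open>g\<close>, hence commutes with \<open>g\<close>\<close>
    then have "odd m \<or> even (fst (\<pi> g) - fst (\<pi> h))" by presburger
    moreover obtain j where j: "\<pi> g = (j, 1)" using g unfolding reflections_def by (cases "\<pi> g") auto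
    moreover have "0 \<le> j" "j < int m"
      using j hom_closed[of g] g reflections_subset by (auto simp: dihedral_carrier_iff)
    ultimately obtain t where "(fst (\<pi> h) + 2 * t) mod int m = j"
      using exists_double_shift_mod[of j m "fst (\<pi> h)"] by auto
    then obtain l where l: "l \<in> conj_class G h" "\<pi> l = \<pi> g"
      using conj_class_reflection_shift[OF h, of t] j by metis
    have "g \<otimes> l = l \<otimes> g"
      using \<pi>_eq_imp_commute l g h reflections_subset G.conj_class_subset_carrier by (metis subsetD)
    then show False
      using adj l(1) G.conj_class_self g reflections_subset unfolding NCCC_adj_def by blast
  qed
next
  assume par: "even m \<and> fst (\<pi> g) mod 2 \<noteq> fst (\<pi> h) mod 2"
  have parity: "fst (\<pi> k) mod 2 \<noteq> fst (\<pi> l) mod 2" if "k \<in> conj_class G g" "l \<in> conj_class G h" for k l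
    using that par conj_class_reflection_parity g h by metis
  have "k \<otimes> l \<noteq> l \<otimes> k" if kl: "k \<in> conj_class G g" "l \<in> conj_class G h" for k l
  proof
    assume comm: "k \<otimes> l = l \<otimes> k"
    have k: "k \<in> reflections" "k \<in> carrier G" and l: "l \<in> reflections" "l \<in> carrier G"
      using kl conj_class_reflections g h reflections_subset by blast+
    define r where "r = inv k \<otimes> l"
    have r: "r \<in> rotations" "r \<in> carrier G"
      unfolding r_def using reflections_inv_mult[OF k(1) l(1)] rotations_subset by auto
    have "l = k \<otimes> r" unfolding r_def using k l by simp
    then have "k \<otimes> (r \<otimes> k) = k \<otimes> (k \<otimes> r)" using comm k r by (simp add: G.m_assoc)
    then have "r \<otimes> k = k \<otimes> r" using k r by simp
    moreover have "\<pi> l \<noteq> \<pi> k" using parity[OF kl] by auto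
    then have "r \<notin> grp_center G" using \<open>l = k \<otimes> r\<close> \<pi>_mult_center k by auto
    ultimately show False using rotation_reflection_not_commute[OF r(1) _ k(1)] by simp
  qed
  moreover have "conj_class G g \<noteq> conj_class G h"
    using parity G.conj_class_self g h reflections_subset by blast
  ultimately show "NCCC_adj G (conj_class G g) (conj_class G h)" unfolding NCCC_adj_def by blast
qed

lemma NCCC_adj_conj_class_iff:
  assumes g: "g \<in> carrier G - grp_center G" and h: "h \<in> carrier G - grp_center G"
  shows "NCCC_adj G (conj_class G g) (conj_class G h) \<longleftrightarrow> (g \<in> rotations \<longleftrightarrow> h \<in> reflections) \<or>
    (g \<in> reflections \<and> h \<in> reflections \<and> even m \<and> fst (\<pi> g) mod 2 \<noteq> fst (\<pi> h) mod 2)"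
proof -
  have disj: "x \<in> rotations \<Longrightarrow> x \<notin> reflections" for x using rotations_reflections_disjoint by blast
  consider "g \<in> rotations" "h \<in> rotations" | "g \<in> rotations" "h \<in> reflections"
    | "g \<in> reflections" "h \<in> rotations" | "g \<in> reflections" "h \<in> reflections"
    using rotation_or_reflection g h by blast
  then show ?thesis
  proof cases
    case 1
    then show ?thesis using not_NCCC_adj_rotations disj by blast
  next
    case 2
    then show ?thesis using NCCC_adj_rotation_reflection g disj by blast
  next
    case 3
    then show ?thesis using NCCC_adj_rotation_reflection[THEN NCCC_adj_sym] h disj by blast
  next
    case 4
    then show ?thesis using NCCC_adj_reflections_iff disj by blast
  qed
qed

lemma reflections_eq_parity_Un: "reflections = reflections_parity 0 \<union> reflections_parity 1"
  unfolding reflections_parity_def by auto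

lemma conj_class_reflections_parity:
  "even m \<Longrightarrow> g \<in> reflections_parity c \<Longrightarrow> conj_class G g \<subseteq> reflections_parity c"
  unfolding reflections_parity_def using conj_class_reflections conj_class_reflection_parity by auto

lemma conj_class_noncentral_rotations:
  "g \<in> rotations - grp_center G \<Longrightarrow> conj_class G g \<subseteq> rotations - grp_center G"
  using conj_class_rotations G.conj_class_not_center rotations_subset by blast

lemma card_rotation_classes: "2 * card rotation_classes = (m - 1) * card (grp_center G)"
proof -
  have "2 * card rotation_classes = card (rotations - grp_center G)"
    using finite_carrier rotations_subset conj_class_noncentral_rotations card_conj_class_rotation
    by (intro G.card_conj_class_image) auto
  also have "\<dots> = card rotations - card (grp_center G)"
    using center_subset_rotations finite_carrier rotations_subset
    by (intro card_Diff_subset) (auto intro: finite_subset)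
  finally show ?thesis using card_rotations by (simp add: diff_mult_distrib)
qed

lemma card_parity_classes:
  assumes "even m" "c = 0 \<or> c = 1"
  shows "2 * card (parity_classes c) = card (grp_center G)"
proof -
  have "m * card (parity_classes c) = card (reflections_parity c)"
    using finite_carrier reflections_subset conj_class_reflections_parity[OF assms(1)] card_conj_class_reflection
    by (intro G.card_conj_class_image) (auto simp: reflections_parity_def)
  also have "\<dots> = (m div 2) * card (grp_center G)"
    by (rule card_reflections_parity[OF assms])
  finally show ?thesis using assms(1) m_pos by (auto elim!: evenE)
qed

lemma NCCC_vertices_eq:
  "NCCC_vertices G = conj_class G ` (rotations - grp_center G) \<union> conj_class G ` reflections"
proof -
  have "carrier G - grp_center G = (rotations - grp_center G) \<union> reflections"
    using rotation_or_reflection rotations_subset reflections_subset center_subset_rotations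
      rotations_reflections_disjoint by blast
  then show ?thesis unfolding NCCC_vertices_def by auto
qed

lemma conj_class_in_rotation_classes_iff:
  "g \<in> carrier G - grp_center G \<Longrightarrow> conj_class G g \<in> rotation_classes \<longleftrightarrow> g \<in> rotations"
  using G.conj_class_in_image_iff[OF _ conj_class_noncentral_rotations, of g] rotations_subset by auto

lemma finite_NCCC_vertices: "finite (NCCC_vertices G)"
  unfolding NCCC_vertices_def using finite_carrier by simp

lemma Q_integral_if_odd:
  assumes "odd m"
  shows "Q_integral (NCCC_vertices G) (NCCC_adj G)"
proof -
  let ?S = "conj_class G ` reflections"
  have in_S: "conj_class G g \<in> ?S \<longleftrightarrow> g \<in> reflections" if "g \<in> carrier G - grp_center G" for g
    using G.conj_class_in_image_iff[OF reflections_subset conj_class_reflections, of g] that by auto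
  show ?thesis
  proof (rule complete_bipartite_Q_integral[OF finite_NCCC_vertices NCCC_vertices_eq])
    show "rotation_classes \<inter> ?S = {}"
      using rotations_subset reflections_subset rotations_reflections_disjoint conj_class_reflections
      by (intro G.conj_class_image_disjoint) auto
    fix u w assume "u \<in> NCCC_vertices G" "w \<in> NCCC_vertices G"
    then obtain g h where g: "g \<in> carrier G - grp_center G" and h: "h \<in> carrier G - grp_center G"
      and "u = conj_class G g" "w = conj_class G h" unfolding NCCC_vertices_def by blast
    then show "NCCC_adj G u w \<longleftrightarrow> (u \<in> rotation_classes \<and> w \<in> ?S) \<or> (u \<in> ?S \<and> w \<in> rotation_classes)"
      using rotation_iff_not_reflection[of g] rotation_iff_not_reflection[of h] assms
      by (simp only: conj_class_in_rotation_classes_iff[OF g] conj_class_in_rotation_classes_iff[OF h]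
          in_S[OF g] in_S[OF h] NCCC_adj_conj_class_iff[OF g h]) auto
  qed
qed

lemma reflections_parity_subset: "reflections_parity c \<subseteq> carrier G"
  unfolding reflections_parity_def using reflections_subset by auto

lemma conj_class_in_parity_classes_iff:
  assumes "even m" "g \<in> carrier G"
  shows "conj_class G g \<in> parity_classes c \<longleftrightarrow> g \<in> reflections \<and> fst (\<pi> g) mod 2 = c"
  using G.conj_class_in_image_iff[OF reflections_parity_subset conj_class_reflections_parity[OF assms(1)] assms(2)]
  unfolding reflections_parity_def by simp

lemma NCCC_vertices_eq_parity_classes:
  "NCCC_vertices G = rotation_classes \<union> parity_classes 0 \<union> parity_classes 1"
  unfolding NCCC_vertices_eq using reflections_eq_parity_Un by auto

lemma parity_classes_disjoint:
  assumes "even m"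
  shows "rotation_classes \<inter> parity_classes c = {}" "parity_classes 0 \<inter> parity_classes 1 = {}"
proof -
  have "rotations - grp_center G \<subseteq> carrier G" using rotations_subset by blast
  moreover have "(rotations - grp_center G) \<inter> reflections_parity c = {}"
    using rotations_reflections_disjoint unfolding reflections_parity_def by blast
  ultimately show "rotation_classes \<inter> parity_classes c = {}"
    using G.conj_class_image_disjoint[OF _ reflections_parity_subset _ conj_class_reflections_parity[OF assms]]
    by blast
  have "reflections_parity 0 \<inter> reflections_parity 1 = {}"
    unfolding reflections_parity_def by auto
  then show "parity_classes 0 \<inter> parity_classes 1 = {}"
    using G.conj_class_image_disjoint[OF reflections_parity_subset reflections_parity_subset _
        conj_class_reflections_parity[OF assms]] by blast
qed

lemma NCCC_adj_iff_if_even: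
  assumes "even m" "u \<in> NCCC_vertices G" "w \<in> NCCC_vertices G"
  shows "NCCC_adj G u w \<longleftrightarrow> (u \<in> rotation_classes \<and> w \<notin> rotation_classes) \<or>
    (u \<in> parity_classes 0 \<and> w \<notin> parity_classes 0) \<or> (u \<in> parity_classes 1 \<and> w \<notin> parity_classes 1)"
proof -
  obtain g h where g: "g \<in> carrier G - grp_center G" and h: "h \<in> carrier G - grp_center G"
    and "u = conj_class G g" "w = conj_class G h"
    using assms(2,3) unfolding NCCC_vertices_def by blast
  moreover have "fst (\<pi> x) mod 2 = 0 \<or> fst (\<pi> x) mod 2 = 1" for x by auto
  ultimately show ?thesis
    using rotation_iff_not_reflection[of g] rotation_iff_not_reflection[of h] assms(1)
    by (simp only: conj_class_in_rotation_classes_iff[OF g] conj_class_in_rotation_classes_iff[OF h]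
        conj_class_in_parity_classes_iff[OF assms(1)] NCCC_adj_conj_class_iff[OF g h] Diff_iff) auto
qed

lemma not_Q_integral_if_even:
  assumes "even m"
  shows "\<not> Q_integral (NCCC_vertices G) (NCCC_adj G)"
proof -
  define p where "p = card (parity_classes 0)"
  have center: "card (grp_center G) = 2 * p"
    using card_parity_classes[OF assms, of 0] unfolding p_def by simp
  have card_B: "card (parity_classes 1) = p"
    using card_parity_classes[OF assms, of 1] center by simp
  have card_I: "card rotation_classes = (m - 1) * p"
    using card_rotation_classes center by simp
  have "p \<ge> 1" using card_center_pos center by simp
  obtain x where x: "x \<in> carrier G" "\<pi> x = (1, 0)"
    using exists_preimage[of 1 0] three_le_m by (auto simp: dihedral_carrier_iff)
  then have "x \<in> rotations - grp_center G" using \<pi>_eq_zero_iff[OF x(1)] unfolding rotations_def by auto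
  then have "rotation_classes \<noteq> {}" by blast
  then show ?thesis
    using complete_tripartite_not_Q_integral[OF finite_NCCC_vertices NCCC_vertices_eq_parity_classes
        parity_classes_disjoint(1)[OF assms, of 0] parity_classes_disjoint(1)[OF assms, of 1]
        parity_classes_disjoint(2)[OF assms] NCCC_adj_iff_if_even[OF assms] card_I p_def[symmetric] card_B
        three_le_m \<open>p \<ge> 1\<close>] by blast
qed

end

lemma central_dihedral_quotientI:
  fixes G (structure)
  assumes "group G" "finite (carrier G)" "3 \<le> m" "G Mod grp_center G \<cong> dihedral m"
  obtains \<pi> where "central_dihedral_quotient G m \<pi>"
proof -
  interpret group G by fact
  interpret normal "grp_center G" G by (rule grp_center_normal)
  let ?Q = "G Mod grp_center G"
  obtain h where h: "h \<in> iso ?Q (dihedral m)" using assms(4) unfolding is_iso_def by auto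
  interpret Q: group_hom ?Q "dihedral m" h
    using factorgroup_is_group group_dihedral assms(3) h by (simp add: group_hom_def group_hom_axioms_def iso_imp_homomorphism)
  define \<pi> where "\<pi> g = h (grp_center G #> g)" for g
  have "\<pi> \<in> hom G (dihedral m)"
    using Group.hom_compose[OF r_coset_hom_Mod iso_imp_homomorphism[OF h]] unfolding \<pi>_def comp_def .
  moreover have "\<pi> ` carrier G = carrier (dihedral m)"
    using h unfolding \<pi>_def iso_iff carrier_FactGroup by (simp add: image_image)
  moreover have "kernel G (dihedral m) \<pi> = grp_center G"
  proof -
    have "\<pi> g = \<one>\<^bsub>dihedral m\<^esub> \<longleftrightarrow> grp_center G #> g = grp_center G" if "g \<in> carrier G" for g
      using h Q.iso_iff Q.hom_one that unfolding \<pi>_def by (auto simp: carrier_FactGroup)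
    then show ?thesis
      using coset_join1[OF _ _ subgroup_axioms] coset_join2[OF _ subgroup_axioms] subset
      unfolding kernel_def by auto
  qed
  ultimately have "central_dihedral_quotient G m \<pi>"
    using assms group_dihedral is_group
    by (simp add: central_dihedral_quotient_def central_dihedral_quotient_axioms_def
        group_hom_def group_hom_axioms_def)
  then show thesis by (rule that)
qed

theorem theorem3p5:
  fixes G (structure) and m :: nat
  assumes "group G" and "finite (carrier G)" and "m \<ge> 3"
    and "G Mod (grp_center G) \<cong> dihedral m"
  shows "Q_integral (NCCC_vertices G) (NCCC_adj G) \<longleftrightarrow> odd m"
proof -
  obtain \<pi> where "central_dihedral_quotient G m \<pi>"
    using central_dihedral_quotientI[OF assms] .
  then interpret central_dihedral_quotient G m \<pi> .
  show ?thesis using Q_integral_if_odd not_Q_integral_if_even by blast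
qed

end
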